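(* Let $\mathbb{C}$ be a pointed protomodular category, let $S$ and $T$ be objects of $\mathbb{C}$, and let $X=S\times T$. If $X$ is proto-complete (respectively complete, complete${}^*$, strong-complete), then so are both $S$ and $T$.
   Context: A pointed category with finite limits is protomodular if the split short five lemma holds. A normal monomorphism is a kernel of some morphism; a protosplit monomorphism is a kernel of a split epimorphism; a monomorphism $m:S\to Y$ is Bourn-normal if there is an equivalence relation $(R,r_1,r_2)$ on $Y$ and $\tilde m:S\times S\to R$ with $r_1\tilde m=m\pi_1$, $r_2\tilde m=m\pi_2$ and the square $r_1\tilde m=m\pi_1$ a pullback. An object $X$ is proto-complete if every protosplit monomorphism with domain $X$ is a split monomorphism; complete if every normal monomorphism with domain $X$ is a split monomorphism; complete${}^*$ if every Bourn-normal monomorphism with domain $X$ is a split monomorphism; strong-complete if every protosplit monomorphism with domain $X$ is a split monomorphism with a unique retraction. *)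

theory Defs
  imports Main
begin

text \<open>A (possibly large) category given explicitly by its objects, arrows,
domain, codomain, identities and composition.  cComp g f is "g after f".\<close>

record ('o, 'a) cat =
  cObj  :: "'o set"
  cArr  :: "'a set"
  cDom  :: "'a \<Rightarrow> 'o"
  cCod  :: "'a \<Rightarrow> 'o"
  cId   :: "'o \<Rightarrow> 'a"
  cComp :: "'a \<Rightarrow> 'a \<Rightarrow> 'a"

definition category :: "('o, 'a) cat \<Rightarrow> bool" where
  "category C \<longleftrightarrow>
     (\<forall>f \<in> cArr C. cDom C f \<in> cObj C \<and> cCod C f \<in> cObj C) \<and>
     (\<forall>X \<in> cObj C. cId C X \<in> cArr C \<and> cDom C (cId C X) = X \<and> cCod C (cId C X) = X) \<and>
     (\<forall>f \<in> cArr C. \<forall>g \<in> cArr C. cCod C f = cDom C g \<longrightarrow>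
        cComp C g f \<in> cArr C \<and> cDom C (cComp C g f) = cDom C f \<and> cCod C (cComp C g f) = cCod C g) \<and>
     (\<forall>f \<in> cArr C. cComp C f (cId C (cDom C f)) = f \<and> cComp C (cId C (cCod C f)) f = f) \<and>
     (\<forall>f \<in> cArr C. \<forall>g \<in> cArr C. \<forall>h \<in> cArr C. cCod C f = cDom C g \<and> cCod C g = cDom C h \<longrightarrow>
        cComp C h (cComp C g f) = cComp C (cComp C h g) f)"

definition hom :: "('o, 'a) cat \<Rightarrow> 'a \<Rightarrow> 'o \<Rightarrow> 'o \<Rightarrow> bool" where
  "hom C f X Y \<longleftrightarrow> f \<in> cArr C \<and> cDom C f = X \<and> cCod C f = Y"

definition mono :: "('o, 'a) cat \<Rightarrow> 'a \<Rightarrow> bool" where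
  "mono C m \<longleftrightarrow> m \<in> cArr C \<and>
     (\<forall>W g h. hom C g W (cDom C m) \<and> hom C h W (cDom C m) \<and> cComp C m g = cComp C m h \<longrightarrow> g = h)"

definition iso :: "('o, 'a) cat \<Rightarrow> 'a \<Rightarrow> bool" where
  "iso C f \<longleftrightarrow> f \<in> cArr C \<and>
     (\<exists>g. hom C g (cCod C f) (cDom C f) \<and> cComp C g f = cId C (cDom C f) \<and> cComp C f g = cId C (cCod C f))"

definition is_retraction :: "('o, 'a) cat \<Rightarrow> 'a \<Rightarrow> 'a \<Rightarrow> bool" where
  "is_retraction C r m \<longleftrightarrow> m \<in> cArr C \<and> hom C r (cCod C m) (cDom C m) \<and> cComp C r m = cId C (cDom C m)"

definition split_mono :: "('o, 'a) cat \<Rightarrow> 'a \<Rightarrow> bool" where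
  "split_mono C m \<longleftrightarrow> m \<in> cArr C \<and> (\<exists>r. is_retraction C r m)"

definition split_epi :: "('o, 'a) cat \<Rightarrow> 'a \<Rightarrow> bool" where
  "split_epi C p \<longleftrightarrow> p \<in> cArr C \<and> (\<exists>s. hom C s (cCod C p) (cDom C p) \<and> cComp C p s = cId C (cCod C p))"

definition terminal :: "('o, 'a) cat \<Rightarrow> 'o \<Rightarrow> bool" where
  "terminal C Z \<longleftrightarrow> Z \<in> cObj C \<and> (\<forall>X \<in> cObj C. \<exists>!f. hom C f X Z)"

definition initial :: "('o, 'a) cat \<Rightarrow> 'o \<Rightarrow> bool" where
  "initial C Z \<longleftrightarrow> Z \<in> cObj C \<and> (\<forall>X \<in> cObj C. \<exists>!f. hom C f Z X)"

definition zero_obj :: "('o, 'a) cat \<Rightarrow> 'o \<Rightarrow> bool" where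
  "zero_obj C Z \<longleftrightarrow> initial C Z \<and> terminal C Z"

definition pointed :: "('o, 'a) cat \<Rightarrow> bool" where
  "pointed C \<longleftrightarrow> (\<exists>Z. zero_obj C Z)"

definition zero_arr :: "('o, 'a) cat \<Rightarrow> 'a \<Rightarrow> bool" where
  "zero_arr C f \<longleftrightarrow> f \<in> cArr C \<and>
     (\<exists>Z g h. zero_obj C Z \<and> hom C h (cDom C f) Z \<and> hom C g Z (cCod C f) \<and> f = cComp C g h)"

definition is_pullback :: "('o, 'a) cat \<Rightarrow> 'a \<Rightarrow> 'a \<Rightarrow> 'o \<Rightarrow> 'a \<Rightarrow> 'a \<Rightarrow> bool" where
  "is_pullback C f g P p1 p2 \<longleftrightarrow>
     f \<in> cArr C \<and> g \<in> cArr C \<and> cCod C f = cCod C g \<and>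
     hom C p1 P (cDom C f) \<and> hom C p2 P (cDom C g) \<and> cComp C f p1 = cComp C g p2 \<and>
     (\<forall>W q1 q2. hom C q1 W (cDom C f) \<and> hom C q2 W (cDom C g) \<and> cComp C f q1 = cComp C g q2 \<longrightarrow>
        (\<exists>!u. hom C u W P \<and> cComp C p1 u = q1 \<and> cComp C p2 u = q2))"

definition has_pullbacks :: "('o, 'a) cat \<Rightarrow> bool" where
  "has_pullbacks C \<longleftrightarrow>
     (\<forall>f g. f \<in> cArr C \<and> g \<in> cArr C \<and> cCod C f = cCod C g \<longrightarrow> (\<exists>P p1 p2. is_pullback C f g P p1 p2))"

definition finitely_complete :: "('o, 'a) cat \<Rightarrow> bool" where
  "finitely_complete C \<longleftrightarrow> (\<exists>Z. terminal C Z) \<and> has_pullbacks C"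

definition is_product :: "('o, 'a) cat \<Rightarrow> 'o \<Rightarrow> 'o \<Rightarrow> 'o \<Rightarrow> 'a \<Rightarrow> 'a \<Rightarrow> bool" where
  "is_product C A B P p1 p2 \<longleftrightarrow>
     A \<in> cObj C \<and> B \<in> cObj C \<and> hom C p1 P A \<and> hom C p2 P B \<and>
     (\<forall>W q1 q2. hom C q1 W A \<and> hom C q2 W B \<longrightarrow>
        (\<exists>!u. hom C u W P \<and> cComp C p1 u = q1 \<and> cComp C p2 u = q2))"

definition is_kernel :: "('o, 'a) cat \<Rightarrow> 'a \<Rightarrow> 'a \<Rightarrow> bool" where
  "is_kernel C k f \<longleftrightarrow>
     f \<in> cArr C \<and> k \<in> cArr C \<and> cCod C k = cDom C f \<and> zero_arr C (cComp C f k) \<and>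
     (\<forall>W x. hom C x W (cDom C f) \<and> zero_arr C (cComp C f x) \<longrightarrow>
        (\<exists>!u. hom C u W (cDom C k) \<and> cComp C k u = x))"

text \<open>split short five lemma (for a pointed category with finite limits)\<close>
definition protomodular :: "('o, 'a) cat \<Rightarrow> bool" where
  "protomodular C \<longleftrightarrow>
     (\<forall>A B p s k A' B' p' s' k' u v w.
        hom C p A B \<and> hom C s B A \<and> cComp C p s = cId C B \<and> is_kernel C k p \<and>
        hom C p' A' B' \<and> hom C s' B' A' \<and> cComp C p' s' = cId C B' \<and> is_kernel C k' p' \<and>
        hom C u (cDom C k) (cDom C k') \<and> hom C v A A' \<and> hom C w B B' \<and>
        cComp C v k = cComp C k' u \<and> cComp C p' v = cComp C w p \<and> cComp C v s = cComp C s' w \<and>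
        iso C u \<and> iso C w \<longrightarrow> iso C v)"

definition normal_mono :: "('o, 'a) cat \<Rightarrow> 'a \<Rightarrow> bool" where
  "normal_mono C m \<longleftrightarrow> (\<exists>f. is_kernel C m f)"

definition protosplit_mono :: "('o, 'a) cat \<Rightarrow> 'a \<Rightarrow> bool" where
  "protosplit_mono C m \<longleftrightarrow> (\<exists>p. split_epi C p \<and> is_kernel C m p)"

definition equiv_rel :: "('o, 'a) cat \<Rightarrow> 'o \<Rightarrow> 'o \<Rightarrow> 'a \<Rightarrow> 'a \<Rightarrow> bool" where
  "equiv_rel C Y R r1 r2 \<longleftrightarrow>
     hom C r1 R Y \<and> hom C r2 R Y \<and>
     (\<forall>W a b. hom C a W R \<and> hom C b W R \<and> cComp C r1 a = cComp C r1 b \<and> cComp C r2 a = cComp C r2 b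
        \<longrightarrow> a = b) \<and>
     (\<forall>W x. hom C x W Y \<longrightarrow> (\<exists>a. hom C a W R \<and> cComp C r1 a = x \<and> cComp C r2 a = x)) \<and>
     (\<forall>W a. hom C a W R \<longrightarrow> (\<exists>b. hom C b W R \<and> cComp C r1 b = cComp C r2 a \<and> cComp C r2 b = cComp C r1 a)) \<and>
     (\<forall>W a b. hom C a W R \<and> hom C b W R \<and> cComp C r2 a = cComp C r1 b \<longrightarrow>
        (\<exists>c. hom C c W R \<and> cComp C r1 c = cComp C r1 a \<and> cComp C r2 c = cComp C r2 b))"

definition bourn_normal :: "('o, 'a) cat \<Rightarrow> 'a \<Rightarrow> bool" where
  "bourn_normal C m \<longleftrightarrow> mono C m \<and>
     (\<exists>R r1 r2 P \<pi>1 \<pi>2 mt.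
        equiv_rel C (cCod C m) R r1 r2 \<and> is_product C (cDom C m) (cDom C m) P \<pi>1 \<pi>2 \<and>
        hom C mt P R \<and> cComp C r1 mt = cComp C m \<pi>1 \<and> cComp C r2 mt = cComp C m \<pi>2 \<and>
        is_pullback C r1 m P mt \<pi>1)"

definition proto_complete :: "('o, 'a) cat \<Rightarrow> 'o \<Rightarrow> bool" where
  "proto_complete C X \<longleftrightarrow> (\<forall>m. protosplit_mono C m \<and> cDom C m = X \<longrightarrow> split_mono C m)"

definition complete_obj :: "('o, 'a) cat \<Rightarrow> 'o \<Rightarrow> bool" where
  "complete_obj C X \<longleftrightarrow> (\<forall>m. normal_mono C m \<and> cDom C m = X \<longrightarrow> split_mono C m)"

definition complete_star :: "('o, 'a) cat \<Rightarrow> 'o \<Rightarrow> bool" where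
  "complete_star C X \<longleftrightarrow> (\<forall>m. bourn_normal C m \<and> cDom C m = X \<longrightarrow> split_mono C m)"

definition strong_complete :: "('o, 'a) cat \<Rightarrow> 'o \<Rightarrow> bool" where
  "strong_complete C X \<longleftrightarrow> (\<forall>m. protosplit_mono C m \<and> cDom C m = X \<longrightarrow> (\<exists>!r. is_retraction C r m))"

end

theory Submission
  imports Defs
begin

(* For m : S \<rightarrow> Y consider m \<times> 1\<^sub>T : S \<times> T \<rightarrow> Y \<times> T. It inherits each of the
   relevant properties of m: if m is a kernel of f, then m \<times> 1\<^sub>T is a kernel of f \<pi>\<^sub>Y (and
   f \<pi>\<^sub>Y is split if f is); if m is Bourn-normal to R, then m \<times> 1\<^sub>T is Bourn-normal to
   R \<times> (T \<times> T). A retraction r' of m \<times> 1\<^sub>T restricts to the retraction \<pi>\<^sub>S r' \<langle>1, 0\<rangle>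
   of m, and every retraction r of m is recovered in this way from the retraction
   \<langle>r \<pi>\<^sub>Y, \<pi>\<^sub>T\<rangle> of m \<times> 1\<^sub>T, so uniqueness of retractions descends as well. The
   factor T is handled by symmetry. *)

locale pointed_lex_category =
  fixes C :: "('o, 'a) cat" and Z :: 'o
  assumes category: "category C" and zero_obj: "zero_obj C Z"
    and finitely_complete: "finitely_complete C"
begin

abbreviation comp (infixr "\<cdot>" 55) where "g \<cdot> f \<equiv> cComp C g f"

lemma arr_dom [simp]: "f \<in> cArr C \<Longrightarrow> cDom C f \<in> cObj C"
  and arr_cod [simp]: "f \<in> cArr C \<Longrightarrow> cCod C f \<in> cObj C"
  and id_arr [simp]: "A \<in> cObj C \<Longrightarrow> cId C A \<in> cArr C"
  and id_dom [simp]: "A \<in> cObj C \<Longrightarrow> cDom C (cId C A) = A"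
  and id_cod [simp]: "A \<in> cObj C \<Longrightarrow> cCod C (cId C A) = A"
  using category unfolding category_def by blast+

lemma comp_arr [simp]: "f \<in> cArr C \<Longrightarrow> g \<in> cArr C \<Longrightarrow> cCod C f = cDom C g \<Longrightarrow> g \<cdot> f \<in> cArr C"
  and comp_dom [simp]: "f \<in> cArr C \<Longrightarrow> g \<in> cArr C \<Longrightarrow> cCod C f = cDom C g \<Longrightarrow> cDom C (g \<cdot> f) = cDom C f"
  and comp_cod [simp]: "f \<in> cArr C \<Longrightarrow> g \<in> cArr C \<Longrightarrow> cCod C f = cDom C g \<Longrightarrow> cCod C (g \<cdot> f) = cCod C g"
  using category unfolding category_def by blast+

lemma comp_id [simp]: "f \<in> cArr C \<Longrightarrow> cDom C f = A \<Longrightarrow> f \<cdot> cId C A = f"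
  and id_comp [simp]: "f \<in> cArr C \<Longrightarrow> cCod C f = A \<Longrightarrow> cId C A \<cdot> f = f"
  using category unfolding category_def by blast+

lemma comp_assoc [simp]:
  "f \<in> cArr C \<Longrightarrow> g \<in> cArr C \<Longrightarrow> h \<in> cArr C \<Longrightarrow> cCod C f = cDom C g \<Longrightarrow> cCod C g = cDom C h \<Longrightarrow>
    (h \<cdot> g) \<cdot> f = h \<cdot> (g \<cdot> f)"
  using category unfolding category_def by metis

lemma comp_reassoc:
  "g \<cdot> f = k \<Longrightarrow> f \<in> cArr C \<Longrightarrow> g \<in> cArr C \<Longrightarrow> x \<in> cArr C \<Longrightarrow> cCod C f = cDom C g \<Longrightarrow>
    cCod C x = cDom C f \<Longrightarrow> g \<cdot> (f \<cdot> x) = k \<cdot> x"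
  by (metis comp_assoc)

lemma zero_obj_obj [simp]: "Z \<in> cObj C"
  using zero_obj unfolding zero_obj_def terminal_def by blast

lemma terminal_hom_unique: "terminal C A \<Longrightarrow> hom C h W A \<Longrightarrow> hom C h' W A \<Longrightarrow> h = h'"
  unfolding terminal_def hom_def by (metis arr_dom)

definition to_zero :: "'o \<Rightarrow> 'a" where
  "to_zero A = (THE h. hom C h A Z)"

definition from_zero :: "'o \<Rightarrow> 'a" where
  "from_zero B = (THE g. hom C g Z B)"

definition zero_map :: "'o \<Rightarrow> 'o \<Rightarrow> 'a" where
  "zero_map A B = from_zero B \<cdot> to_zero A"

lemma hom_to_zero: "A \<in> cObj C \<Longrightarrow> hom C (to_zero A) A Z"
  unfolding to_zero_def
  by (rule theI') (use zero_obj in \<open>auto simp: zero_obj_def terminal_def\<close>)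

lemma to_zero_unique: "hom C h A Z \<Longrightarrow> h = to_zero A"
  using hom_to_zero terminal_hom_unique zero_obj unfolding zero_obj_def hom_def by (metis arr_dom)

lemma from_zero_ex1: "B \<in> cObj C \<Longrightarrow> \<exists>!g. hom C g Z B"
  using zero_obj unfolding zero_obj_def initial_def by blast

lemma hom_from_zero: "B \<in> cObj C \<Longrightarrow> hom C (from_zero B) Z B"
  unfolding from_zero_def by (rule theI') (rule from_zero_ex1)

lemma from_zero_unique: "hom C g Z B \<Longrightarrow> g = from_zero B"
  using from_zero_ex1 hom_from_zero unfolding hom_def by (metis arr_cod)

lemma zero_map_arr [simp]: "A \<in> cObj C \<Longrightarrow> B \<in> cObj C \<Longrightarrow> zero_map A B \<in> cArr C"
  and zero_map_dom [simp]: "A \<in> cObj C \<Longrightarrow> B \<in> cObj C \<Longrightarrow> cDom C (zero_map A B) = A"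
  and zero_map_cod [simp]: "A \<in> cObj C \<Longrightarrow> B \<in> cObj C \<Longrightarrow> cCod C (zero_map A B) = B"
  using hom_to_zero[of A] hom_from_zero[of B] unfolding zero_map_def hom_def by auto

lemma zero_map_comp [simp]:
  assumes "x \<in> cArr C" "cCod C x = A" "B \<in> cObj C"
  shows "zero_map A B \<cdot> x = zero_map (cDom C x) B"
proof -
  have A: "A \<in> cObj C" using assms by auto
  have "zero_map A B \<cdot> x = from_zero B \<cdot> (to_zero A \<cdot> x)"
    using assms hom_to_zero[OF A] hom_from_zero[of B] unfolding zero_map_def hom_def by simp
  also have "to_zero A \<cdot> x = to_zero (cDom C x)"
    using assms hom_to_zero[OF A] by (intro to_zero_unique) (auto simp: hom_def)
  finally show ?thesis unfolding zero_map_def .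
qed

lemma zero_arr_iff_eq_zero_map:
  assumes f: "f \<in> cArr C"
  shows "zero_arr C f \<longleftrightarrow> f = zero_map (cDom C f) (cCod C f)"
proof
  assume "zero_arr C f"
  then obtain Z' g h where Z': "zero_obj C Z'" and h: "hom C h (cDom C f) Z'"
    and g: "hom C g Z' (cCod C f)" and f_eq: "f = g \<cdot> h"
    unfolding zero_arr_def by blast
  have "Z' \<in> cObj C" using Z' unfolding zero_obj_def terminal_def by blast
  then obtain a where a: "hom C a Z Z'" using zero_obj unfolding zero_obj_def initial_def by blast
  have h_eq: "h = a \<cdot> to_zero (cDom C f)"
    using Z' h a hom_to_zero[of "cDom C f"] f terminal_hom_unique
    unfolding zero_obj_def hom_def by (metis arr_dom comp_arr comp_cod comp_dom)
  have "g \<cdot> a = from_zero (cCod C f)"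
    using a g by (intro from_zero_unique) (auto simp: hom_def)
  then show "f = zero_map (cDom C f) (cCod C f)"
    using f_eq h_eq a g hom_to_zero[of "cDom C f"] f unfolding zero_map_def hom_def
    by (metis arr_dom comp_assoc)
next
  assume "f = zero_map (cDom C f) (cCod C f)"
  then show "zero_arr C f"
    using f zero_obj hom_to_zero[of "cDom C f"] hom_from_zero[of "cCod C f"]
    unfolding zero_arr_def zero_map_def by auto
qed

lemma zero_arr_zero_map: "A \<in> cObj C \<Longrightarrow> B \<in> cObj C \<Longrightarrow> zero_arr C (zero_map A B)"
  by (simp add: zero_arr_iff_eq_zero_map)

lemma mono_of_is_kernel:
  assumes k: "is_kernel C k f"
  shows "mono C k"
  unfolding mono_def
proof (intro conjI allI impI)
  have arrs: "f \<in> cArr C" "k \<in> cArr C" "cCod C k = cDom C f" and "zero_arr C (f \<cdot> k)"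
    using k unfolding is_kernel_def by auto
  then have fk: "f \<cdot> k = zero_map (cDom C k) (cCod C f)"
    using zero_arr_iff_eq_zero_map[of "f \<cdot> k"] by simp
  show "k \<in> cArr C" by (fact arrs(2))
  fix W g h assume "hom C g W (cDom C k) \<and> hom C h W (cDom C k) \<and> k \<cdot> g = k \<cdot> h"
  then have g: "g \<in> cArr C" "cDom C g = W" "cCod C g = cDom C k" and "hom C h W (cDom C k)"
    and gh: "k \<cdot> g = k \<cdot> h" unfolding hom_def by auto
  have "f \<cdot> (k \<cdot> g) = zero_map W (cCod C f)"
    using arrs g comp_reassoc[OF fk] by simp
  moreover have "W \<in> cObj C" using g by (metis arr_dom)
  ultimately have "hom C (k \<cdot> g) W (cDom C f)" "zero_arr C (f \<cdot> (k \<cdot> g))"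
    using arrs g unfolding hom_def by (simp_all add: zero_arr_zero_map)
  then have "\<exists>!u. hom C u W (cDom C k) \<and> k \<cdot> u = k \<cdot> g"
    using k unfolding is_kernel_def by blast
  then show "g = h"
    using g gh \<open>hom C h W (cDom C k)\<close> unfolding hom_def by metis
qed

lemma product_arrs:
  assumes "is_product C A B P p1 p2"
  shows "p1 \<in> cArr C" "cDom C p1 = P" "cCod C p1 = A" "p2 \<in> cArr C" "cDom C p2 = P"
    "cCod C p2 = B" "A \<in> cObj C" "B \<in> cObj C" "P \<in> cObj C"
  using assms unfolding is_product_def hom_def by (auto dest: arr_dom)

lemma product_tuple:
  assumes pr: "is_product C A B P p1 p2" and "hom C q1 W A" "hom C q2 W B"
  obtains u where "u \<in> cArr C" "cDom C u = W" "cCod C u = P" "p1 \<cdot> u = q1" "p2 \<cdot> u = q2"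
  using assms unfolding is_product_def hom_def by blast

lemma product_arr_eqI:
  assumes pr: "is_product C A B P p1 p2" and "p1 \<cdot> u = p1 \<cdot> v" "p2 \<cdot> u = p2 \<cdot> v"
    and "u \<in> cArr C" "v \<in> cArr C" "cDom C u = cDom C v" "cCod C u = P" "cCod C v = P"
  shows "u = v"
proof -
  note p = product_arrs[OF pr]
  have "hom C (p1 \<cdot> u) (cDom C u) A" "hom C (p2 \<cdot> u) (cDom C u) B"
    using p assms unfolding hom_def by auto
  then have "\<exists>!w. hom C w (cDom C u) P \<and> p1 \<cdot> w = p1 \<cdot> u \<and> p2 \<cdot> w = p2 \<cdot> u"
    using pr unfolding is_product_def by blast
  moreover have "hom C u (cDom C u) P" "hom C v (cDom C u) P"
    using assms unfolding hom_def by auto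
  ultimately show ?thesis using assms by metis
qed

lemma pullback_lift:
  assumes "is_pullback C f g P p1 p2" "hom C q1 W (cDom C f)" "hom C q2 W (cDom C g)" "f \<cdot> q1 = g \<cdot> q2"
  obtains u where "hom C u W P" "p1 \<cdot> u = q1" "p2 \<cdot> u = q2"
  using assms unfolding is_pullback_def by blast

lemma pullback_arr_eqI:
  assumes pb: "is_pullback C f g P p1 p2" and "p1 \<cdot> u = p1 \<cdot> v" "p2 \<cdot> u = p2 \<cdot> v"
    and u: "hom C u W P" and v: "hom C v W P"
  shows "u = v"
proof -
  have arrs: "f \<in> cArr C" "g \<in> cArr C" "p1 \<in> cArr C" "p2 \<in> cArr C" "u \<in> cArr C"
    "cCod C p1 = cDom C f" "cCod C p2 = cDom C g" "cDom C p1 = P" "cDom C p2 = P" "cCod C u = P" "cDom C u = W"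
    using pb u unfolding is_pullback_def hom_def by auto
  have "f \<cdot> (p1 \<cdot> u) = (g \<cdot> p2) \<cdot> u"
    using pb arrs unfolding is_pullback_def by (intro comp_reassoc) auto
  then have "hom C (p1 \<cdot> u) W (cDom C f)" "hom C (p2 \<cdot> u) W (cDom C g)" "f \<cdot> (p1 \<cdot> u) = g \<cdot> (p2 \<cdot> u)"
    using arrs unfolding hom_def by simp_all
  then have "\<exists>!w. hom C w W P \<and> p1 \<cdot> w = p1 \<cdot> u \<and> p2 \<cdot> w = p2 \<cdot> u"
    using pb unfolding is_pullback_def by blast
  then show ?thesis using assms by metis
qed

lemma product_exists:
  assumes "A \<in> cObj C" "B \<in> cObj C"
  obtains P p1 p2 where "is_product C A B P p1 p2"
proof -
  have A: "hom C (to_zero A) A Z" and B: "hom C (to_zero B) B Z"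
    using hom_to_zero assms by auto
  then obtain P p1 p2 where pb: "is_pullback C (to_zero A) (to_zero B) P p1 p2"
    using finitely_complete unfolding finitely_complete_def has_pullbacks_def hom_def by metis
  have "is_product C A B P p1 p2" unfolding is_product_def
  proof (intro conjI allI impI)
    show "A \<in> cObj C" "B \<in> cObj C" by fact+
    show "hom C p1 P A" "hom C p2 P B" using pb A B unfolding is_pullback_def hom_def by auto
    fix W q1 q2 assume q: "hom C q1 W A \<and> hom C q2 W B"
    then have "hom C (to_zero A \<cdot> q1) W Z" "hom C (to_zero B \<cdot> q2) W Z"
      using A B unfolding hom_def by auto
    then have "to_zero A \<cdot> q1 = to_zero B \<cdot> q2" using to_zero_unique by metis
    moreover have "cDom C (to_zero A) = A" "cDom C (to_zero B) = B" using A B unfolding hom_def by auto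
    ultimately show "\<exists>!u. hom C u W P \<and> p1 \<cdot> u = q1 \<and> p2 \<cdot> u = q2"
      using pb q unfolding is_pullback_def by simp
  qed
  then show thesis by (rule that)
qed

lemma is_product_swap: "is_product C A B P p1 p2 \<Longrightarrow> is_product C B A P p2 p1"
  unfolding is_product_def
proof (elim conjE, intro conjI allI impI)
  fix W q1 q2
  assume "\<forall>W q1 q2. hom C q1 W A \<and> hom C q2 W B \<longrightarrow> (\<exists>!u. hom C u W P \<and> p1 \<cdot> u = q1 \<and> p2 \<cdot> u = q2)"
    and "hom C q1 W B \<and> hom C q2 W A"
  then have "\<exists>!u. hom C u W P \<and> p1 \<cdot> u = q2 \<and> p2 \<cdot> u = q1" by blast
  then show "\<exists>!u. hom C u W P \<and> p2 \<cdot> u = q1 \<and> p1 \<cdot> u = q2" by (metis (no_types, lifting))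
qed auto

lemma split_epi_product_fst:
  assumes pr: "is_product C A B P p1 p2"
  shows "split_epi C p1"
proof -
  note p = product_arrs[OF pr]
  obtain s where "s \<in> cArr C" "cDom C s = A" "cCod C s = P" "p1 \<cdot> s = cId C A"
    by (rule product_tuple[OF pr, of "cId C A" A "zero_map A B"]) (use p in \<open>auto simp: hom_def\<close>)
  then show ?thesis using p unfolding split_epi_def hom_def by auto
qed

lemma split_epi_comp:
  assumes p: "split_epi C p" and q: "split_epi C q" and pq: "cCod C q = cDom C p"
  shows "split_epi C (p \<cdot> q)"
proof -
  obtain s where s: "hom C s (cCod C p) (cDom C p)" "p \<cdot> s = cId C (cCod C p)"
    using p unfolding split_epi_def by blast
  obtain t where t: "hom C t (cCod C q) (cDom C q)" "q \<cdot> t = cId C (cCod C q)"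
    using q unfolding split_epi_def by blast
  have arrs: "p \<in> cArr C" "q \<in> cArr C" using p q unfolding split_epi_def by auto
  have ts: "hom C (t \<cdot> s) (cCod C (p \<cdot> q)) (cDom C (p \<cdot> q))"
    using s t arrs pq unfolding hom_def by simp
  have "q \<cdot> (t \<cdot> s) = cId C (cCod C q) \<cdot> s"
    using s t arrs pq unfolding hom_def by (intro comp_reassoc) auto
  then have "(p \<cdot> q) \<cdot> (t \<cdot> s) = p \<cdot> s"
    using s t arrs pq unfolding hom_def by simp
  also have "\<dots> = cId C (cCod C (p \<cdot> q))"
    using s arrs pq by simp
  finally show ?thesis
    using ts arrs pq unfolding split_epi_def by auto
qed

end

locale arrow_times_identity = pointed_lex_category +
  fixes S T X pS pT m Y Y' qY qT m'
  assumes prX: "is_product C S T X pS pT"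
    and m: "m \<in> cArr C" "cDom C m = S" "cCod C m = Y"
    and prY: "is_product C Y T Y' qY qT"
    and m': "m' \<in> cArr C" "cDom C m' = X" "cCod C m' = Y'" "qY \<cdot> m' = m \<cdot> pS" "qT \<cdot> m' = pT"
begin

lemmas [simp] = product_arrs[OF prX] product_arrs[OF prY] m m'

lemma m'_comp [simp]:
  "x \<in> cArr C \<Longrightarrow> cCod C x = X \<Longrightarrow> qY \<cdot> (m' \<cdot> x) = m \<cdot> (pS \<cdot> x)"
  "x \<in> cArr C \<Longrightarrow> cCod C x = X \<Longrightarrow> qT \<cdot> (m' \<cdot> x) = pT \<cdot> x"
  using comp_reassoc[OF m'(4)] comp_reassoc[OF m'(5)] by simp_all

definition incl where
  "incl = (THE e. hom C e Y Y' \<and> qY \<cdot> e = cId C Y \<and> qT \<cdot> e = zero_map Y T)"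

lemma incl [simp]: "incl \<in> cArr C" "cDom C incl = Y" "cCod C incl = Y'"
    "qY \<cdot> incl = cId C Y" "qT \<cdot> incl = zero_map Y T"
proof -
  have "hom C (cId C Y) Y Y" "hom C (zero_map Y T) Y T"
    unfolding hom_def by simp_all
  then have "\<exists>!e. hom C e Y Y' \<and> qY \<cdot> e = cId C Y \<and> qT \<cdot> e = zero_map Y T"
    using prY unfolding is_product_def by blast
  then have "hom C incl Y Y' \<and> qY \<cdot> incl = cId C Y \<and> qT \<cdot> incl = zero_map Y T"
    unfolding incl_def by (rule theI')
  then show "incl \<in> cArr C" "cDom C incl = Y" "cCod C incl = Y'"
    "qY \<cdot> incl = cId C Y" "qT \<cdot> incl = zero_map Y T"
    unfolding hom_def by auto
qed

lemma is_retraction_of_times_identity: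
  assumes "is_retraction C r' m'"
  shows "is_retraction C (pS \<cdot> (r' \<cdot> incl)) m"
proof -
  have r': "r' \<in> cArr C" "cDom C r' = Y'" "cCod C r' = X" "r' \<cdot> m' = cId C X"
    using assms unfolding is_retraction_def hom_def by auto
  obtain i where i: "i \<in> cArr C" "cDom C i = S" "cCod C i = X" "pS \<cdot> i = cId C S" "pT \<cdot> i = zero_map S T"
    by (rule product_tuple[OF prX, of "cId C S" S "zero_map S T"]) (auto simp: hom_def)
  have "incl \<cdot> m = m' \<cdot> i"
    by (rule product_arr_eqI[OF prY]) (simp_all add: i comp_reassoc[OF incl(4)] comp_reassoc[OF incl(5)])
  moreover have "r' \<cdot> (m' \<cdot> i) = cId C X \<cdot> i"
    using r' i by (intro comp_reassoc) auto
  ultimately have "(pS \<cdot> (r' \<cdot> incl)) \<cdot> m = cId C S"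
    using r' i by simp
  then show ?thesis
    using r' unfolding is_retraction_def hom_def by simp
qed

lemma split_mono_of_times_identity: "split_mono C m' \<Longrightarrow> split_mono C m"
  using is_retraction_of_times_identity unfolding split_mono_def by auto

lemma is_retraction_times_identity:
  assumes r: "is_retraction C r m"
  obtains r' where "is_retraction C r' m'" "hom C r' Y' X" "pS \<cdot> r' = r \<cdot> qY"
proof -
  have rr: "r \<in> cArr C" "cDom C r = Y" "cCod C r = S" "r \<cdot> m = cId C S"
    using r unfolding is_retraction_def hom_def by auto
  obtain r' where r': "r' \<in> cArr C" "cDom C r' = Y'" "cCod C r' = X" "pS \<cdot> r' = r \<cdot> qY" "pT \<cdot> r' = qT"
    by (rule product_tuple[OF prX, of "r \<cdot> qY" Y' qT]) (use rr in \<open>auto simp: hom_def\<close>)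
  have "r' \<cdot> m' = cId C X"
    by (rule product_arr_eqI[OF prX])
      (simp_all add: r' rr comp_reassoc[OF rr(4)] comp_reassoc[OF r'(4)] comp_reassoc[OF r'(5)])
  then show thesis
    using r' that unfolding is_retraction_def hom_def by simp
qed

lemma retraction_eq_restriction:
  assumes r: "is_retraction C r m" and r': "hom C r' Y' X" "pS \<cdot> r' = r \<cdot> qY"
  shows "r = pS \<cdot> (r' \<cdot> incl)"
proof -
  have "r \<in> cArr C" "cDom C r = Y" "cCod C r = S"
    using r unfolding is_retraction_def hom_def by auto
  moreover have "pS \<cdot> (r' \<cdot> incl) = (r \<cdot> qY) \<cdot> incl"
    using r' unfolding hom_def by (intro comp_reassoc) auto
  ultimately show ?thesis by simp
qed

lemma unique_retraction_of_times_identity: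
  assumes unique: "\<exists>!r'. is_retraction C r' m'"
  shows "\<exists>!r. is_retraction C r m"
proof -
  obtain r0 where r0: "is_retraction C r0 m"
    using unique is_retraction_of_times_identity by blast
  show ?thesis
  proof (rule ex1I[of _ r0])
    fix r assume r: "is_retraction C r m"
    obtain r' where r': "is_retraction C r' m'" "hom C r' Y' X" "pS \<cdot> r' = r \<cdot> qY"
      using is_retraction_times_identity[OF r] by blast
    obtain r0' where r0': "is_retraction C r0' m'" "hom C r0' Y' X" "pS \<cdot> r0' = r0 \<cdot> qY"
      using is_retraction_times_identity[OF r0] by blast
    have "r' = r0'" using unique r'(1) r0'(1) by blast
    then show "r = r0"
      using retraction_eq_restriction[OF r r'(2,3)] retraction_eq_restriction[OF r0 r0'(2,3)] by simp
  qed fact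
qed

lemma mono_times_identity:
  assumes "mono C m"
  shows "mono C m'"
  unfolding mono_def
proof (intro conjI allI impI)
  show "m' \<in> cArr C" by simp
  fix W g h assume "hom C g W (cDom C m') \<and> hom C h W (cDom C m') \<and> m' \<cdot> g = m' \<cdot> h"
  then have g: "g \<in> cArr C" "cDom C g = W" "cCod C g = X" and h: "h \<in> cArr C" "cDom C h = W" "cCod C h = X"
    and gh: "m' \<cdot> g = m' \<cdot> h" unfolding hom_def by auto
  have "m \<cdot> (pS \<cdot> g) = qY \<cdot> (m' \<cdot> g)" using g by simp
  also have "\<dots> = m \<cdot> (pS \<cdot> h)" using gh h by simp
  finally have "pS \<cdot> g = pS \<cdot> h"
    using assms g h unfolding mono_def hom_def by auto
  moreover have "pT \<cdot> g = pT \<cdot> h"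
    using m'_comp(2)[of g] m'_comp(2)[of h] gh g h by simp
  ultimately show "g = h"
    by (rule product_arr_eqI[OF prX]) (use g h in simp_all)
qed

lemma is_kernel_times_identity:
  assumes k: "is_kernel C m f"
  shows "is_kernel C m' (f \<cdot> qY)"
proof -
  have f: "f \<in> cArr C" "cDom C f = Y" and "zero_arr C (f \<cdot> m)"
    using k m(3) unfolding is_kernel_def by auto
  then have fm: "f \<cdot> m = zero_map S (cCod C f)"
    using zero_arr_iff_eq_zero_map[of "f \<cdot> m"] by simp
  have mono': "mono C m'"
    using mono_times_identity[OF mono_of_is_kernel[OF k]] .
  show ?thesis unfolding is_kernel_def
  proof (intro conjI allI impI)
    show "f \<cdot> qY \<in> cArr C" "m' \<in> cArr C" "cCod C m' = cDom C (f \<cdot> qY)" using f by simp_all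
    have "(f \<cdot> qY) \<cdot> m' = zero_map X (cCod C f)"
      using f comp_reassoc[OF fm] by simp
    then show "zero_arr C ((f \<cdot> qY) \<cdot> m')" using f by (simp add: zero_arr_zero_map)
    fix W x assume "hom C x W (cDom C (f \<cdot> qY)) \<and> zero_arr C ((f \<cdot> qY) \<cdot> x)"
    then have x: "x \<in> cArr C" "cDom C x = W" "cCod C x = Y'"
      and "hom C (qY \<cdot> x) W (cDom C f)" "zero_arr C (f \<cdot> (qY \<cdot> x))"
      using f unfolding hom_def by auto
    then obtain v where v: "hom C v W S" "m \<cdot> v = qY \<cdot> x"
      using k m(2) unfolding is_kernel_def by metis
    obtain u where u: "u \<in> cArr C" "cDom C u = W" "cCod C u = X" "pS \<cdot> u = v" "pT \<cdot> u = qT \<cdot> x"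
      by (rule product_tuple[OF prX, of v W "qT \<cdot> x"]) (use v x in \<open>auto simp: hom_def\<close>)
    have mu: "m' \<cdot> u = x"
      by (rule product_arr_eqI[OF prY]) (use u x v in \<open>simp_all add: hom_def\<close>)
    show "\<exists>!u. hom C u W (cDom C m') \<and> m' \<cdot> u = x"
    proof (rule ex1I[of _ u])
      show "hom C u W (cDom C m') \<and> m' \<cdot> u = x" using u mu unfolding hom_def by simp
      fix u' assume "hom C u' W (cDom C m') \<and> m' \<cdot> u' = x"
      with mu mono' u show "u' = u" unfolding mono_def hom_def by auto
    qed
  qed
qed

lemma protosplit_mono_times_identity:
  assumes "protosplit_mono C m"
  shows "protosplit_mono C m'"
proof -
  obtain p where p: "split_epi C p" "is_kernel C m p"
    using assms unfolding protosplit_mono_def by blast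
  have "cDom C p = Y" using p(2) unfolding is_kernel_def by simp
  then have "split_epi C (p \<cdot> qY)"
    using p(1) split_epi_product_fst[OF prY] by (intro split_epi_comp) simp_all
  then show ?thesis
    using is_kernel_times_identity[OF p(2)] unfolding protosplit_mono_def by blast
qed

end

(* The equivalence relation (r1', r2') : R \<times> (T \<times> T) \<rightarrow> Y \<times> T is the product of
   (r1, r2) : R \<rightarrow> Y with the indiscrete relation (t1, t2) : T \<times> T \<rightarrow> T. *)

locale relation_times_indiscrete = pointed_lex_category +
  fixes Y T Y' qY qT R r1 r2 Q t1 t2 RR \<rho> \<sigma> r1' r2'
  assumes prY: "is_product C Y T Y' qY qT"
    and equiv: "equiv_rel C Y R r1 r2"
    and prQ: "is_product C T T Q t1 t2"
    and prR: "is_product C R Q RR \<rho> \<sigma>"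
    and r1': "hom C r1' RR Y'" "qY \<cdot> r1' = r1 \<cdot> \<rho>" "qT \<cdot> r1' = t1 \<cdot> \<sigma>"
    and r2': "hom C r2' RR Y'" "qY \<cdot> r2' = r2 \<cdot> \<rho>" "qT \<cdot> r2' = t2 \<cdot> \<sigma>"
begin

lemma r_arrs [simp]:
  "r1 \<in> cArr C" "cDom C r1 = R" "cCod C r1 = Y" "r2 \<in> cArr C" "cDom C r2 = R" "cCod C r2 = Y"
  "r1' \<in> cArr C" "cDom C r1' = RR" "cCod C r1' = Y'" "r2' \<in> cArr C" "cDom C r2' = RR" "cCod C r2' = Y'"
  using equiv r1'(1) r2'(1) unfolding equiv_rel_def hom_def by auto

lemmas [simp] = product_arrs[OF prY] product_arrs[OF prQ] product_arrs[OF prR]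

lemma r'_comp [simp]:
  assumes "x \<in> cArr C" "cCod C x = RR"
  shows "qY \<cdot> (r1' \<cdot> x) = r1 \<cdot> (\<rho> \<cdot> x)" "qT \<cdot> (r1' \<cdot> x) = t1 \<cdot> (\<sigma> \<cdot> x)"
    and "qY \<cdot> (r2' \<cdot> x) = r2 \<cdot> (\<rho> \<cdot> x)" "qT \<cdot> (r2' \<cdot> x) = t2 \<cdot> (\<sigma> \<cdot> x)"
  using assms comp_reassoc[OF r1'(2)] comp_reassoc[OF r1'(3)]
    comp_reassoc[OF r2'(2)] comp_reassoc[OF r2'(3)] by simp_all

lemma rel_jointly_monic:
  assumes a: "hom C a W RR" and b: "hom C b W RR"
    and eq1: "r1' \<cdot> a = r1' \<cdot> b" and eq2: "r2' \<cdot> a = r2' \<cdot> b"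
  shows "a = b"
proof -
  have arrs: "a \<in> cArr C" "cDom C a = W" "cCod C a = RR" "b \<in> cArr C" "cDom C b = W" "cCod C b = RR"
    using a b unfolding hom_def by auto
  have "qY \<cdot> (r1' \<cdot> a) = qY \<cdot> (r1' \<cdot> b)" "qY \<cdot> (r2' \<cdot> a) = qY \<cdot> (r2' \<cdot> b)"
    "qT \<cdot> (r1' \<cdot> a) = qT \<cdot> (r1' \<cdot> b)" "qT \<cdot> (r2' \<cdot> a) = qT \<cdot> (r2' \<cdot> b)"
    using eq1 eq2 by simp_all
  then have R_legs: "r1 \<cdot> (\<rho> \<cdot> a) = r1 \<cdot> (\<rho> \<cdot> b)" "r2 \<cdot> (\<rho> \<cdot> a) = r2 \<cdot> (\<rho> \<cdot> b)"
    and Q_legs: "t1 \<cdot> (\<sigma> \<cdot> a) = t1 \<cdot> (\<sigma> \<cdot> b)" "t2 \<cdot> (\<sigma> \<cdot> a) = t2 \<cdot> (\<sigma> \<cdot> b)"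
    using arrs by simp_all
  have "hom C (\<rho> \<cdot> a) W R" "hom C (\<rho> \<cdot> b) W R"
    using arrs unfolding hom_def by simp_all
  with R_legs have "\<rho> \<cdot> a = \<rho> \<cdot> b"
    using equiv unfolding equiv_rel_def by blast
  moreover from Q_legs have "\<sigma> \<cdot> a = \<sigma> \<cdot> b"
    by (rule product_arr_eqI[OF prQ]) (use arrs in simp_all)
  ultimately show "a = b"
    by (rule product_arr_eqI[OF prR]) (use arrs in simp_all)
qed

lemma rel_reflexive:
  assumes x: "hom C x W Y'"
  obtains c where "hom C c W RR" "r1' \<cdot> c = x" "r2' \<cdot> c = x"
proof -
  have x': "x \<in> cArr C" "cDom C x = W" "cCod C x = Y'" using x unfolding hom_def by auto
  have "hom C (qY \<cdot> x) W Y" using x' unfolding hom_def by simp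
  then obtain a where a: "hom C a W R" "r1 \<cdot> a = qY \<cdot> x" "r2 \<cdot> a = qY \<cdot> x"
    using equiv unfolding equiv_rel_def by blast
  obtain d where d: "d \<in> cArr C" "cDom C d = W" "cCod C d = Q" "t1 \<cdot> d = qT \<cdot> x" "t2 \<cdot> d = qT \<cdot> x"
    by (rule product_tuple[OF prQ, of "qT \<cdot> x" W "qT \<cdot> x"]) (use x' in \<open>auto simp: hom_def\<close>)
  obtain c where c: "c \<in> cArr C" "cDom C c = W" "cCod C c = RR" "\<rho> \<cdot> c = a" "\<sigma> \<cdot> c = d"
    by (rule product_tuple[OF prR, of a W d]) (use a d in \<open>auto simp: hom_def\<close>)
  have "r1' \<cdot> c = x" "r2' \<cdot> c = x"
    by (rule product_arr_eqI[OF prY]; use x' c d a in \<open>simp add: hom_def\<close>)+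
  then show thesis using c that unfolding hom_def by blast
qed

lemma rel_symmetric:
  assumes b: "hom C b W RR"
  obtains c where "hom C c W RR" "r1' \<cdot> c = r2' \<cdot> b" "r2' \<cdot> c = r1' \<cdot> b"
proof -
  have b': "b \<in> cArr C" "cDom C b = W" "cCod C b = RR" using b unfolding hom_def by auto
  have "hom C (\<rho> \<cdot> b) W R" using b' unfolding hom_def by simp
  then obtain a where a: "hom C a W R" "r1 \<cdot> a = r2 \<cdot> (\<rho> \<cdot> b)" "r2 \<cdot> a = r1 \<cdot> (\<rho> \<cdot> b)"
    using equiv unfolding equiv_rel_def by blast
  obtain d where d: "d \<in> cArr C" "cDom C d = W" "cCod C d = Q"
      "t1 \<cdot> d = t2 \<cdot> (\<sigma> \<cdot> b)" "t2 \<cdot> d = t1 \<cdot> (\<sigma> \<cdot> b)"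
    by (rule product_tuple[OF prQ, of "t2 \<cdot> (\<sigma> \<cdot> b)" W "t1 \<cdot> (\<sigma> \<cdot> b)"]) (use b' in \<open>auto simp: hom_def\<close>)
  obtain c where c: "c \<in> cArr C" "cDom C c = W" "cCod C c = RR" "\<rho> \<cdot> c = a" "\<sigma> \<cdot> c = d"
    by (rule product_tuple[OF prR, of a W d]) (use a d in \<open>auto simp: hom_def\<close>)
  have "r1' \<cdot> c = r2' \<cdot> b" "r2' \<cdot> c = r1' \<cdot> b"
    by (rule product_arr_eqI[OF prY]; use b' c d a in \<open>simp add: hom_def\<close>)+
  then show thesis using c that unfolding hom_def by blast
qed

lemma rel_transitive:
  assumes a: "hom C a W RR" and b: "hom C b W RR" and ab: "r2' \<cdot> a = r1' \<cdot> b"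
  obtains c where "hom C c W RR" "r1' \<cdot> c = r1' \<cdot> a" "r2' \<cdot> c = r2' \<cdot> b"
proof -
  have arrs: "a \<in> cArr C" "cDom C a = W" "cCod C a = RR" "b \<in> cArr C" "cDom C b = W" "cCod C b = RR"
    using a b unfolding hom_def by auto
  have "qY \<cdot> (r2' \<cdot> a) = qY \<cdot> (r1' \<cdot> b)" using ab by simp
  then have "r2 \<cdot> (\<rho> \<cdot> a) = r1 \<cdot> (\<rho> \<cdot> b)" using arrs by simp
  moreover have "hom C (\<rho> \<cdot> a) W R" "hom C (\<rho> \<cdot> b) W R"
    using arrs unfolding hom_def by simp_all
  ultimately obtain e where e: "hom C e W R" "r1 \<cdot> e = r1 \<cdot> (\<rho> \<cdot> a)" "r2 \<cdot> e = r2 \<cdot> (\<rho> \<cdot> b)"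
    using equiv unfolding equiv_rel_def by blast
  obtain d where d: "d \<in> cArr C" "cDom C d = W" "cCod C d = Q"
      "t1 \<cdot> d = t1 \<cdot> (\<sigma> \<cdot> a)" "t2 \<cdot> d = t2 \<cdot> (\<sigma> \<cdot> b)"
    by (rule product_tuple[OF prQ, of "t1 \<cdot> (\<sigma> \<cdot> a)" W "t2 \<cdot> (\<sigma> \<cdot> b)"]) (use arrs in \<open>auto simp: hom_def\<close>)
  obtain c where c: "c \<in> cArr C" "cDom C c = W" "cCod C c = RR" "\<rho> \<cdot> c = e" "\<sigma> \<cdot> c = d"
    by (rule product_tuple[OF prR, of e W d]) (use e d in \<open>auto simp: hom_def\<close>)
  have "r1' \<cdot> c = r1' \<cdot> a" "r2' \<cdot> c = r2' \<cdot> b"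
    by (rule product_arr_eqI[OF prY]; use arrs c d e in \<open>simp add: hom_def\<close>)+
  then show thesis using c that unfolding hom_def by blast
qed

lemma equiv_rel_times_indiscrete: "equiv_rel C Y' RR r1' r2'"
  unfolding equiv_rel_def
proof (intro conjI allI impI)
  show "hom C r1' RR Y'" "hom C r2' RR Y'" by (fact r1'(1) r2'(1))+
  show "a = b" if "hom C a W RR \<and> hom C b W RR \<and> r1' \<cdot> a = r1' \<cdot> b \<and> r2' \<cdot> a = r2' \<cdot> b" for W a b
    using that rel_jointly_monic by blast
  show "\<exists>c. hom C c W RR \<and> r1' \<cdot> c = x \<and> r2' \<cdot> c = x" if "hom C x W Y'" for W x
    using rel_reflexive[OF that] by blast
  show "\<exists>c. hom C c W RR \<and> r1' \<cdot> c = r2' \<cdot> b \<and> r2' \<cdot> c = r1' \<cdot> b" if "hom C b W RR" for W b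
    using rel_symmetric[OF that] by blast
  show "\<exists>c. hom C c W RR \<and> r1' \<cdot> c = r1' \<cdot> a \<and> r2' \<cdot> c = r2' \<cdot> b"
    if "hom C a W RR \<and> hom C b W RR \<and> r2' \<cdot> a = r1' \<cdot> b" for W a b
    using that rel_transitive by blast
qed

end

locale bourn_witness_times_identity = arrow_times_identity + relation_times_indiscrete +
  fixes P p1 p2 mt PP w1 w2 hh kk mt'
  assumes prP: "is_product C S S P p1 p2"
    and mt: "hom C mt P R" "r1 \<cdot> mt = m \<cdot> p1" "r2 \<cdot> mt = m \<cdot> p2"
    and pb: "is_pullback C r1 m P mt p1"
    and prPP: "is_product C X X PP w1 w2"
    and hh: "hom C hh PP P" "p1 \<cdot> hh = pS \<cdot> w1" "p2 \<cdot> hh = pS \<cdot> w2"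
    and kk: "hom C kk PP Q" "t1 \<cdot> kk = pT \<cdot> w1" "t2 \<cdot> kk = pT \<cdot> w2"
    and mt': "hom C mt' PP RR" "\<rho> \<cdot> mt' = mt \<cdot> hh" "\<sigma> \<cdot> mt' = kk"
begin

lemmas [simp] = product_arrs[OF prP] product_arrs[OF prPP]

lemma witness_arrs [simp]:
  "mt \<in> cArr C" "cDom C mt = P" "cCod C mt = R" "hh \<in> cArr C" "cDom C hh = PP" "cCod C hh = P"
  "kk \<in> cArr C" "cDom C kk = PP" "cCod C kk = Q" "mt' \<in> cArr C" "cDom C mt' = PP" "cCod C mt' = RR"
  using mt(1) hh(1) kk(1) mt'(1) unfolding hom_def by auto

lemma witness_comp [simp]:
  assumes "x \<in> cArr C" "cCod C x = PP"
  shows "\<rho> \<cdot> (mt' \<cdot> x) = mt \<cdot> (hh \<cdot> x)" "\<sigma> \<cdot> (mt' \<cdot> x) = kk \<cdot> x"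
    and "p1 \<cdot> (hh \<cdot> x) = pS \<cdot> (w1 \<cdot> x)" "p2 \<cdot> (hh \<cdot> x) = pS \<cdot> (w2 \<cdot> x)"
    and "t1 \<cdot> (kk \<cdot> x) = pT \<cdot> (w1 \<cdot> x)" "t2 \<cdot> (kk \<cdot> x) = pT \<cdot> (w2 \<cdot> x)"
  using assms comp_reassoc[OF mt'(2)] comp_reassoc[OF mt'(3)] comp_reassoc[OF hh(2)]
    comp_reassoc[OF hh(3)] comp_reassoc[OF kk(2)] comp_reassoc[OF kk(3)] by simp_all

lemma mt_comp [simp]:
  assumes "x \<in> cArr C" "cCod C x = P"
  shows "r1 \<cdot> (mt \<cdot> x) = m \<cdot> (p1 \<cdot> x)" "r2 \<cdot> (mt \<cdot> x) = m \<cdot> (p2 \<cdot> x)"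
  using assms comp_reassoc[OF mt(2)] comp_reassoc[OF mt(3)] by simp_all

lemma mt'_legs: "r1' \<cdot> mt' = m' \<cdot> w1" "r2' \<cdot> mt' = m' \<cdot> w2"
  by (rule product_arr_eqI[OF prY]; simp add: mt'(2,3) hh(2,3) kk(2,3))+

lemma pullback_lift_times_identity:
  assumes q1: "hom C q1 W RR" and q2: "hom C q2 W X" and q: "r1' \<cdot> q1 = m' \<cdot> q2"
  obtains u where "hom C u W PP" "mt' \<cdot> u = q1" "w1 \<cdot> u = q2"
proof -
  have arrs: "q1 \<in> cArr C" "cDom C q1 = W" "cCod C q1 = RR" "q2 \<in> cArr C" "cDom C q2 = W" "cCod C q2 = X"
    using q1 q2 unfolding hom_def by auto
  have "qY \<cdot> (r1' \<cdot> q1) = qY \<cdot> (m' \<cdot> q2)" "qT \<cdot> (r1' \<cdot> q1) = qT \<cdot> (m' \<cdot> q2)"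
    using q by simp_all
  then have qR: "r1 \<cdot> (\<rho> \<cdot> q1) = m \<cdot> (pS \<cdot> q2)" and qT_eq: "t1 \<cdot> (\<sigma> \<cdot> q1) = pT \<cdot> q2"
    using arrs by simp_all
  obtain v where v: "hom C v W P" "mt \<cdot> v = \<rho> \<cdot> q1" "p1 \<cdot> v = pS \<cdot> q2"
    by (rule pullback_lift[OF pb _ _ qR]) (use arrs in \<open>simp_all add: hom_def\<close>)
  have v': "v \<in> cArr C" "cDom C v = W" "cCod C v = P" using v(1) unfolding hom_def by auto
  obtain b where b: "b \<in> cArr C" "cDom C b = W" "cCod C b = X" "pS \<cdot> b = p2 \<cdot> v" "pT \<cdot> b = t2 \<cdot> (\<sigma> \<cdot> q1)"
    by (rule product_tuple[OF prX, of "p2 \<cdot> v" W "t2 \<cdot> (\<sigma> \<cdot> q1)"]) (use v' arrs in \<open>auto simp: hom_def\<close>)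
  obtain u where u: "u \<in> cArr C" "cDom C u = W" "cCod C u = PP" "w1 \<cdot> u = q2" "w2 \<cdot> u = b"
    by (rule product_tuple[OF prPP, of q2 W b]) (use arrs b in \<open>auto simp: hom_def\<close>)
  have hh_u: "hh \<cdot> u = v"
    by (rule product_arr_eqI[OF prP]) (use u v' v b in simp_all)
  have kk_u: "kk \<cdot> u = \<sigma> \<cdot> q1"
    by (rule product_arr_eqI[OF prQ]) (use u arrs b qT_eq in simp_all)
  have "mt' \<cdot> u = q1"
    by (rule product_arr_eqI[OF prR]) (use u arrs v hh_u kk_u in simp_all)
  then show thesis
    using that u unfolding hom_def by simp
qed

lemma pullback_arr_eqI_times_identity:
  assumes u: "hom C u W PP" and v: "hom C v W PP" and "mt' \<cdot> u = mt' \<cdot> v" "w1 \<cdot> u = w1 \<cdot> v"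
  shows "u = v"
proof -
  have arrs: "u \<in> cArr C" "cDom C u = W" "cCod C u = PP" "v \<in> cArr C" "cDom C v = W" "cCod C v = PP"
    using u v unfolding hom_def by auto
  have "\<rho> \<cdot> (mt' \<cdot> u) = \<rho> \<cdot> (mt' \<cdot> v)" "\<sigma> \<cdot> (mt' \<cdot> u) = \<sigma> \<cdot> (mt' \<cdot> v)"
    "pS \<cdot> (w1 \<cdot> u) = pS \<cdot> (w1 \<cdot> v)"
    by (simp_all only: assms(3,4))
  then have mt_hh: "mt \<cdot> (hh \<cdot> u) = mt \<cdot> (hh \<cdot> v)" and kk_eq: "kk \<cdot> u = kk \<cdot> v"
    and p1_hh: "p1 \<cdot> (hh \<cdot> u) = p1 \<cdot> (hh \<cdot> v)"
    using arrs by simp_all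
  have "hh \<cdot> u = hh \<cdot> v"
    by (rule pullback_arr_eqI[OF pb mt_hh p1_hh]) (use arrs in \<open>simp_all add: hom_def\<close>)
  then have "p2 \<cdot> (hh \<cdot> u) = p2 \<cdot> (hh \<cdot> v)" "t2 \<cdot> (kk \<cdot> u) = t2 \<cdot> (kk \<cdot> v)"
    using kk_eq by simp_all
  then have "pS \<cdot> (w2 \<cdot> u) = pS \<cdot> (w2 \<cdot> v)" "pT \<cdot> (w2 \<cdot> u) = pT \<cdot> (w2 \<cdot> v)"
    using arrs by simp_all
  then have "w2 \<cdot> u = w2 \<cdot> v"
    by (rule product_arr_eqI[OF prX]) (use arrs in simp_all)
  with assms(4) show "u = v"
    by (rule product_arr_eqI[OF prPP]) (use arrs in simp_all)
qed

lemma is_pullback_times_identity: "is_pullback C r1' m' PP mt' w1"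
  unfolding is_pullback_def
proof (intro conjI allI impI)
  show "r1' \<in> cArr C" "m' \<in> cArr C" "cCod C r1' = cCod C m'" by simp_all
  show "hom C mt' PP (cDom C r1')" "hom C w1 PP (cDom C m')" unfolding hom_def by simp_all
  show "r1' \<cdot> mt' = m' \<cdot> w1" by (fact mt'_legs(1))
  fix W q1 q2 assume "hom C q1 W (cDom C r1') \<and> hom C q2 W (cDom C m') \<and> r1' \<cdot> q1 = m' \<cdot> q2"
  then have "hom C q1 W RR" "hom C q2 W X" "r1' \<cdot> q1 = m' \<cdot> q2" by simp_all
  then obtain u where u: "hom C u W PP" "mt' \<cdot> u = q1" "w1 \<cdot> u = q2"
    by (rule pullback_lift_times_identity)
  show "\<exists>!u. hom C u W PP \<and> mt' \<cdot> u = q1 \<and> w1 \<cdot> u = q2"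
  proof (rule ex1I[of _ u])
    fix u' assume u': "hom C u' W PP \<and> mt' \<cdot> u' = q1 \<and> w1 \<cdot> u' = q2"
    show "u' = u"
      by (rule pullback_arr_eqI_times_identity) (use u u' in simp_all)
  qed (use u in simp)
qed

end

context arrow_times_identity
begin

lemma bourn_normal_times_identity:
  assumes "bourn_normal C m"
  shows "bourn_normal C m'"
proof -
  obtain R r1 r2 P p1 p2 mt where mono: "mono C m" and equiv: "equiv_rel C Y R r1 r2"
    and prP: "is_product C S S P p1 p2" and mt: "hom C mt P R" "r1 \<cdot> mt = m \<cdot> p1" "r2 \<cdot> mt = m \<cdot> p2"
    and pb: "is_pullback C r1 m P mt p1"
    using assms m unfolding bourn_normal_def by auto
  have R: "R \<in> cObj C" "r1 \<in> cArr C" "cDom C r1 = R" "cCod C r1 = Y" "r2 \<in> cArr C" "cDom C r2 = R" "cCod C r2 = Y"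
    using equiv unfolding equiv_rel_def hom_def by (auto dest: arr_dom)
  note [simp] = product_arrs[OF prP]
  have mt_arr: "mt \<in> cArr C" "cDom C mt = P" "cCod C mt = R" using mt(1) unfolding hom_def by auto
  obtain Q t1 t2 where prQ: "is_product C T T Q t1 t2" by (rule product_exists[of T T]) auto
  note [simp] = product_arrs[OF prQ]
  obtain RR \<rho> \<sigma> where prR: "is_product C R Q RR \<rho> \<sigma>" by (rule product_exists[of R Q]) (auto simp: R)
  note [simp] = product_arrs[OF prR]
  obtain PP w1 w2 where prPP: "is_product C X X PP w1 w2" by (rule product_exists[of X X]) auto
  note [simp] = product_arrs[OF prPP]
  obtain r1' where r1': "hom C r1' RR Y'" "qY \<cdot> r1' = r1 \<cdot> \<rho>" "qT \<cdot> r1' = t1 \<cdot> \<sigma>"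
    by (rule product_tuple[OF prY, of "r1 \<cdot> \<rho>" RR "t1 \<cdot> \<sigma>"]) (use R in \<open>auto simp: hom_def\<close>)
  obtain r2' where r2': "hom C r2' RR Y'" "qY \<cdot> r2' = r2 \<cdot> \<rho>" "qT \<cdot> r2' = t2 \<cdot> \<sigma>"
    by (rule product_tuple[OF prY, of "r2 \<cdot> \<rho>" RR "t2 \<cdot> \<sigma>"]) (use R in \<open>auto simp: hom_def\<close>)
  obtain hh where hh: "hom C hh PP P" "p1 \<cdot> hh = pS \<cdot> w1" "p2 \<cdot> hh = pS \<cdot> w2"
    by (rule product_tuple[OF prP, of "pS \<cdot> w1" PP "pS \<cdot> w2"]) (auto simp: hom_def)
  obtain kk where kk: "hom C kk PP Q" "t1 \<cdot> kk = pT \<cdot> w1" "t2 \<cdot> kk = pT \<cdot> w2"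
    by (rule product_tuple[OF prQ, of "pT \<cdot> w1" PP "pT \<cdot> w2"]) (auto simp: hom_def)
  obtain mt' where mt'_tuple: "hom C mt' PP RR" "\<rho> \<cdot> mt' = mt \<cdot> hh" "\<sigma> \<cdot> mt' = kk"
    by (rule product_tuple[OF prR, of "mt \<cdot> hh" PP kk]) (use mt_arr hh kk in \<open>auto simp: hom_def\<close>)
  interpret bourn_witness_times_identity C Z S T X pS pT m Y Y' qY qT m'
      R r1 r2 Q t1 t2 RR \<rho> \<sigma> r1' r2' P p1 p2 mt PP w1 w2 hh kk mt'
    by unfold_locales (fact prY equiv prQ prR r1' r2' prP mt pb prPP hh kk mt'_tuple)+
  show ?thesis
    unfolding bourn_normal_def m'(2,3)
    using mono_times_identity[OF mono] equiv_rel_times_indiscrete prPP mt'_legs is_pullback_times_identity mt'_tuple(1)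
    by blast
qed

end

context pointed_lex_category
begin

lemma arrow_times_identity_exists:
  assumes prX: "is_product C S T X pS pT" and m: "m \<in> cArr C" "cDom C m = S"
  obtains Y' qY qT m' where "arrow_times_identity C Z S T X pS pT m (cCod C m) Y' qY qT m'"
proof -
  note pX = product_arrs[OF prX]
  obtain Y' qY qT where prY: "is_product C (cCod C m) T Y' qY qT"
    using product_exists[of "cCod C m" T] m pX by auto
  note pY = product_arrs[OF prY]
  obtain m' where "m' \<in> cArr C" "cDom C m' = X" "cCod C m' = Y'" "qY \<cdot> m' = m \<cdot> pS" "qT \<cdot> m' = pT"
    by (rule product_tuple[OF prY, of "m \<cdot> pS" X pT]) (use m pX in \<open>auto simp: hom_def\<close>)
  then show thesis
    using that prX prY m unfolding arrow_times_identity_def arrow_times_identity_axioms_def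
    using pointed_lex_category_axioms by blast
qed

lemma proto_complete_product_fst:
  assumes prX: "is_product C S T X pS pT" and X: "proto_complete C X"
  shows "proto_complete C S"
  unfolding proto_complete_def
proof (intro allI impI)
  fix m assume hm: "protosplit_mono C m \<and> cDom C m = S"
  then have "m \<in> cArr C" unfolding protosplit_mono_def is_kernel_def by blast
  then obtain Y' qY qT m' where "arrow_times_identity C Z S T X pS pT m (cCod C m) Y' qY qT m'"
    using arrow_times_identity_exists prX hm by blast
  then interpret arrow_times_identity C Z S T X pS pT m "cCod C m" Y' qY qT m' .
  have "protosplit_mono C m'" using hm protosplit_mono_times_identity by blast
  then have "split_mono C m'" using X unfolding proto_complete_def by simp
  then show "split_mono C m" by (rule split_mono_of_times_identity)
qed

lemma complete_obj_product_fst: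
  assumes prX: "is_product C S T X pS pT" and X: "complete_obj C X"
  shows "complete_obj C S"
  unfolding complete_obj_def
proof (intro allI impI)
  fix m assume hm: "normal_mono C m \<and> cDom C m = S"
  then obtain f where f: "is_kernel C m f" unfolding normal_mono_def by blast
  then have "m \<in> cArr C" unfolding is_kernel_def by blast
  then obtain Y' qY qT m' where "arrow_times_identity C Z S T X pS pT m (cCod C m) Y' qY qT m'"
    using arrow_times_identity_exists prX hm by blast
  then interpret arrow_times_identity C Z S T X pS pT m "cCod C m" Y' qY qT m' .
  have "normal_mono C m'"
    using is_kernel_times_identity[OF f] unfolding normal_mono_def by blast
  then have "split_mono C m'"
    using X unfolding complete_obj_def by simp
  then show "split_mono C m" by (rule split_mono_of_times_identity)
qed

lemma complete_star_product_fst: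
  assumes prX: "is_product C S T X pS pT" and X: "complete_star C X"
  shows "complete_star C S"
  unfolding complete_star_def
proof (intro allI impI)
  fix m assume hm: "bourn_normal C m \<and> cDom C m = S"
  then have "m \<in> cArr C" unfolding bourn_normal_def mono_def by blast
  then obtain Y' qY qT m' where "arrow_times_identity C Z S T X pS pT m (cCod C m) Y' qY qT m'"
    using arrow_times_identity_exists prX hm by blast
  then interpret arrow_times_identity C Z S T X pS pT m "cCod C m" Y' qY qT m' .
  have "bourn_normal C m'" using hm bourn_normal_times_identity by blast
  then have "split_mono C m'" using X unfolding complete_star_def by simp
  then show "split_mono C m" by (rule split_mono_of_times_identity)
qed

lemma strong_complete_product_fst:
  assumes prX: "is_product C S T X pS pT" and X: "strong_complete C X"
  shows "strong_complete C S"
  unfolding strong_complete_def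
proof (intro allI impI)
  fix m assume hm: "protosplit_mono C m \<and> cDom C m = S"
  then have "m \<in> cArr C" unfolding protosplit_mono_def is_kernel_def by blast
  then obtain Y' qY qT m' where "arrow_times_identity C Z S T X pS pT m (cCod C m) Y' qY qT m'"
    using arrow_times_identity_exists prX hm by blast
  then interpret arrow_times_identity C Z S T X pS pT m "cCod C m" Y' qY qT m' .
  have "protosplit_mono C m'" using hm protosplit_mono_times_identity by blast
  then have "\<exists>!r'. is_retraction C r' m'" using X unfolding strong_complete_def by simp
  then show "\<exists>!r. is_retraction C r m" by (rule unique_retraction_of_times_identity)
qed

end

theorem proposition4p12:
  fixes C :: "('o, 'a) cat" and S T X :: 'o and pS pT :: 'a
  assumes "category C" and "pointed C" and "finitely_complete C" and "protomodular C"
    and "is_product C S T X pS pT"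
  shows "(proto_complete C X \<longrightarrow> proto_complete C S \<and> proto_complete C T) \<and>
         (complete_obj C X \<longrightarrow> complete_obj C S \<and> complete_obj C T) \<and>
         (complete_star C X \<longrightarrow> complete_star C S \<and> complete_star C T) \<and>
         (strong_complete C X \<longrightarrow> strong_complete C S \<and> strong_complete C T)"
proof -
  obtain Z where "zero_obj C Z" using assms(2) unfolding pointed_def by blast
  then interpret pointed_lex_category C Z
    using assms(1,3) by unfold_locales
  note prS = assms(5) and prT = is_product_swap[OF assms(5)]
  show ?thesis
    using proto_complete_product_fst[OF prS] proto_complete_product_fst[OF prT]
      complete_obj_product_fst[OF prS] complete_obj_product_fst[OF prT]
      complete_star_product_fst[OF prS] complete_star_product_fst[OF prT]
      strong_complete_product_fst[OF prS] strong_complete_product_fst[OF prT]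
    by blast
qed

end
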